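(* Assume (A1). Then: (i) there is $c>0$ such that for all $\rho,h>0$ with $T/h$ an integer, all $\mu\in C([0,T];\mathcal{P}_1(\mathbb{R}^d))$ and all $t\in[0,T]$, the function $v_{\rho,h}[\mu](\cdot,t)$ is Lipschitz with constant $c$; (ii) there is $c>0$, independent of $(\rho,h,\mu,t)$, such that $v_{\rho,h}[\mu](x_i+x_j,t)-2v_{\rho,h}[\mu](x_i,t)+v_{\rho,h}[\mu](x_i-x_j,t)\le c|x_j|^2$ for all grid points $x_i,x_j$ and all $t\in[0,T]$.
   Context: $\mathcal{P}_1$: probability measures with finite first moment, 1-Wasserstein distance. Assumption (A1): $F,G:\mathbb{R}^d\times\mathcal{P}_1\to\mathbb{R}$ uniformly bounded, $F(\cdot,m),G(\cdot,m)\in C^2$ with first and second derivatives bounded uniformly in $x,m$; $\sigma:[0,T]\to\mathbb{R}^{d\times r}$ with continuous columns $\sigma_\ell$; $m_0$ absolutely continuous with bounded compactly supported density. Grid: $N=T/h$, $x_i=i\rho$ ($i\in\mathbb{Z}^d$), $t_k=kh$; $\beta_i$ barycentric coordinate relative to $x_i$ of a fixed regular triangulation with vertices on the grid; $I[f]=\sum_if_i\beta_i$. Scheme: $v_{i,N}=G(x_i,\mu(T))$, and for $k=N-1,\dots,0$, $v_{i,k}=\inf_{\alpha\in\mathbb{R}^d}\big[\frac{1}{2r}\sum_{\ell=1}^r(I[v_{\cdot,k+1}](x_i-h\alpha+\sqrt{hr}\sigma_\ell(t_k))+I[v_{\cdot,k+1}](x_i-h\alpha-\sqrt{hr}\sigma_\ell(t_k)))+\frac12h|\alpha|^2+hF(x_i,\mu(t_k))\big]$;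 $v_{\rho,h}[\mu](x,t)=I[v_{\cdot,[t/h]}](x)$ with $[\cdot]$ the integer part. *)

theory Defs
  imports "HOL-Probability.Probability"
begin

definition P1 :: "('a::euclidean_space) measure \<Rightarrow> bool" where
  "P1 m \<longleftrightarrow> prob_space m \<and> sets m = sets (borel :: 'a measure) \<and>
     (\<integral>\<^sup>+ x. ennreal (norm x) \<partial>m) < \<infinity>"

definition couplings :: "('a::euclidean_space) measure \<Rightarrow> 'a measure \<Rightarrow> ('a \<times> 'a) measure set" where
  "couplings m m' = {\<pi>. prob_space \<pi> \<and> sets \<pi> = sets (borel :: ('a \<times> 'a) measure) \<and>
      distr \<pi> borel fst = m \<and> distr \<pi> borel snd = m'}"

definition W1 :: "('a::euclidean_space) measure \<Rightarrow> 'a measure \<Rightarrow> ennreal" where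
  "W1 m m' = (INF \<pi>\<in>couplings m m'. \<integral>\<^sup>+ z. ennreal (dist (fst z) (snd z)) \<partial>\<pi>)"

definition cont_P1_curve :: "real \<Rightarrow> (real \<Rightarrow> ('a::euclidean_space) measure) \<Rightarrow> bool" where
  "cont_P1_curve T \<mu> \<longleftrightarrow> (\<forall>t\<in>{0..T}. P1 (\<mu> t)) \<and>
     (\<forall>t\<in>{0..T}. \<forall>\<epsilon>>0. \<exists>\<delta>>0. \<forall>s\<in>{0..T}. \<bar>s - t\<bar> < \<delta> \<longrightarrow> W1 (\<mu> s) (\<mu> t) < ennreal \<epsilon>)"

definition A1_coupling :: "(real^'n \<Rightarrow> (real^'n) measure \<Rightarrow> real) \<Rightarrow> bool" where
  "A1_coupling f \<longleftrightarrow>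
     (\<exists>C. \<forall>x m. P1 m \<longrightarrow> \<bar>f x m\<bar> \<le> C) \<and>
     (\<exists>Df D2f C. \<forall>m. P1 m \<longrightarrow>
        continuous_on UNIV (D2f m) \<and>
        (\<forall>x. ((\<lambda>y. f y m) has_derivative blinfun_apply (Df m x)) (at x) \<and>
             (Df m has_derivative blinfun_apply (D2f m x)) (at x) \<and>
             norm (Df m x) \<le> C \<and> norm (D2f m x) \<le> C))"

definition A1 :: "real \<Rightarrow> (real^'n \<Rightarrow> (real^'n) measure \<Rightarrow> real) \<Rightarrow> (real^'n \<Rightarrow> (real^'n) measure \<Rightarrow> real)
    \<Rightarrow> (real \<Rightarrow> real^'r^'n) \<Rightarrow> (real^'n) measure \<Rightarrow> bool" where
  "A1 T F G \<sigma> m0 \<longleftrightarrow> A1_coupling F \<and> A1_coupling G \<and>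
     (\<forall>l. continuous_on {0..T} (\<lambda>t. column l (\<sigma> t))) \<and>
     P1 m0 \<and>
     (\<exists>g C. g \<in> borel_measurable borel \<and> (\<forall>x. 0 \<le> g x \<and> g x \<le> C) \<and>
        bounded {x. g x \<noteq> 0} \<and> m0 = density lborel (\<lambda>x. ennreal (g x)))"

definition emb :: "int^'n \<Rightarrow> real^'n" where
  "emb z = (\<chi> k. real_of_int (z $ k))"

definition gp :: "real \<Rightarrow> int^'n \<Rightarrow> real^'n" where
  "gp \<rho> i = \<rho> *\<^sub>R emb i"

text \<open>A regular triangulation of R^d with vertices in Z^d (it is then scaled by \<rho>):
  a set of nondegenerate simplices (sets of d+1 affinely independent integer points) covering R^d,
  meeting face to face, invariant under integer translations and of uniformly bounded size.\<close>
definition regular_triangulation :: "(int^'n) set set \<Rightarrow> bool" where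
  "regular_triangulation Tri \<longleftrightarrow>
     (\<forall>S\<in>Tri. finite S \<and> card S = CARD('n) + 1 \<and> \<not> affine_dependent (emb ` S)) \<and>
     (\<Union>S\<in>Tri. convex hull (emb ` S)) = UNIV \<and>
     (\<forall>S\<in>Tri. \<forall>S'\<in>Tri. convex hull (emb ` S) \<inter> convex hull (emb ` S') = convex hull (emb ` (S \<inter> S'))) \<and>
     (\<forall>S\<in>Tri. \<forall>z. (\<lambda>v. v + z) ` S \<in> Tri) \<and>
     (\<exists>B. \<forall>S\<in>Tri. \<forall>a\<in>S. \<forall>b\<in>S. norm (emb a - emb b) \<le> B)"

definition barycentric_coords :: "(int^'n) set set \<Rightarrow> (int^'n \<Rightarrow> real^'n \<Rightarrow> real) \<Rightarrow> bool" where
  "barycentric_coords Tri \<phi> \<longleftrightarrow>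
     (\<forall>S\<in>Tri. \<forall>y\<in>convex hull (emb ` S).
        (\<forall>z. z \<notin> S \<longrightarrow> \<phi> z y = 0) \<and> (\<forall>z\<in>S. 0 \<le> \<phi> z y) \<and>
        (\<Sum>z\<in>S. \<phi> z y) = 1 \<and> (\<Sum>z\<in>S. \<phi> z y *\<^sub>R emb z) = y)"

text \<open>\<beta>_i(x) = \<phi> i (x/\<rho>), and I[f](x) = \<Sum>_i f_i \<beta>_i(x) (finitely many nonzero terms).\<close>
definition interp :: "(int^'n \<Rightarrow> real^'n \<Rightarrow> real) \<Rightarrow> real \<Rightarrow> (int^'n \<Rightarrow> real) \<Rightarrow> real^'n \<Rightarrow> real" where
  "interp \<phi> \<rho> f x = (\<Sum>i\<in>{i. \<phi> i ((1/\<rho>) *\<^sub>R x) \<noteq> 0}. f i * \<phi> i ((1/\<rho>) *\<^sub>R x))"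

text \<open>scheme_vals ... m = the grid values v_{.,N-m}.\<close>
fun scheme_vals :: "(int^'n \<Rightarrow> real^'n \<Rightarrow> real) \<Rightarrow> (real^'n \<Rightarrow> (real^'n) measure \<Rightarrow> real)
    \<Rightarrow> (real^'n \<Rightarrow> (real^'n) measure \<Rightarrow> real) \<Rightarrow> (real \<Rightarrow> real^'r^'n) \<Rightarrow> real
    \<Rightarrow> real \<Rightarrow> real \<Rightarrow> nat \<Rightarrow> (real \<Rightarrow> (real^'n) measure) \<Rightarrow> nat \<Rightarrow> (int^'n \<Rightarrow> real)" where
  "scheme_vals \<phi> F G \<sigma> T \<rho> h N \<mu> 0 = (\<lambda>i. G (gp \<rho> i) (\<mu> T))"
| "scheme_vals \<phi> F G \<sigma> T \<rho> h N \<mu> (Suc m) =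
     (\<lambda>i. let tk = real (N - Suc m) * h; w = interp \<phi> \<rho> (scheme_vals \<phi> F G \<sigma> T \<rho> h N \<mu> m) in
        (INF \<alpha>. (1 / (2 * real CARD('r))) *
            (\<Sum>l\<in>(UNIV :: 'r set).
               w (gp \<rho> i - h *\<^sub>R \<alpha> + sqrt (h * real CARD('r)) *\<^sub>R column l (\<sigma> tk))
             + w (gp \<rho> i - h *\<^sub>R \<alpha> - sqrt (h * real CARD('r)) *\<^sub>R column l (\<sigma> tk)))
          + h / 2 * (norm \<alpha>)\<^sup>2 + h * F (gp \<rho> i) (\<mu> tk)))"

definition v_grid where
  "v_grid \<phi> F G \<sigma> T \<rho> h N \<mu> k = scheme_vals \<phi> F G \<sigma> T \<rho> h N \<mu> (N - k)"

definition v_rh where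
  "v_rh \<phi> F G \<sigma> T \<rho> h N \<mu> x t = interp \<phi> \<rho> (v_grid \<phi> F G \<sigma> T \<rho> h N \<mu> (nat \<lfloor>t / h\<rfloor>)) x"

end

theory Submission
  imports Defs
begin

text \<open>
  The interpolation operator is a positive averaging (the barycentric weights are nonnegative and
  sum to one) that commutes with translations by grid vectors, because the triangulation is
  translation invariant. Hence, for a fixed control \<open>\<alpha>\<close>, the difference of the cost of the scheme
  at the grid points \<open>x\<^sub>i + x\<^sub>q\<close> and \<open>x\<^sub>i\<close> is the interpolant of the first difference of the values
  at the next time step plus \<open>h (F(x\<^sub>i + x\<^sub>q) - F(x\<^sub>i))\<close>, and likewise for second differences.
  Taking the infimum over \<open>\<alpha>\<close> preserves one-sided bounds on first differences and upper bounds
  on second differences, so every backward time step increases the discrete Lipschitz and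
  semiconcavity constants by at most \<open>h C\<^sub>F\<close>, and they stay below \<open>C\<^sub>G + T C\<^sub>F\<close>.
  Semiconcavity at grid points passes to the interpolant directly. For the Lipschitz bound on the
  whole space, the barycentric coordinates are affine on each simplex with uniformly bounded
  gradients, since up to translation there are only finitely many simplices, and the Lipschitz
  bounds on the individual simplices glue together along segments.
\<close>

section \<open>Grid points\<close>

lemma emb_add: "emb (a + b) = emb a + emb b"
  and emb_diff: "emb (a - b) = emb a - emb b"
  and emb_uminus: "emb (- a) = - emb a"
  and emb_zero: "emb 0 = 0"
  by (simp_all add: emb_def vec_eq_iff)

lemma inj_emb: "inj emb"
  by (auto simp: inj_def emb_def vec_eq_iff)

lemma gp_add: "gp \<rho> (a + b) = gp \<rho> a + gp \<rho> b"
  and gp_diff: "gp \<rho> (a - b) = gp \<rho> a - gp \<rho> b"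
  and gp_uminus: "gp \<rho> (- a) = - gp \<rho> a"
  by (simp_all add: gp_def emb_add emb_diff emb_uminus algebra_simps)

lemma finite_lattice_points: "finite {z::int^'n. norm (emb z) \<le> R}"
proof (rule finite_subset)
  let ?A = "{-\<lceil>R\<rceil>..\<lceil>R\<rceil>}"
  show "{z::int^'n. norm (emb z) \<le> R} \<subseteq> vec_lambda ` (PiE UNIV (\<lambda>_. ?A))"
  proof
    fix z :: "int^'n" assume "z \<in> {z. norm (emb z) \<le> R}"
    then have "z $ k \<in> ?A" for k
      using component_le_norm_cart[of "emb z" k] by (simp add: emb_def) linarith
    then show "z \<in> vec_lambda ` (PiE UNIV (\<lambda>_. ?A))"
      by (intro image_eqI[of _ _ "vec_nth z"]) auto
  qed
  show "finite (vec_lambda ` (PiE (UNIV :: 'n set) (\<lambda>_. ?A)))"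
    by (intro finite_imageI finite_PiE) auto
qed

lemma convex_hull_emb_translate:
  "convex hull (emb ` ((\<lambda>v. v + m) ` S)) = (\<lambda>y. y + emb m) ` (convex hull (emb ` S))"
proof -
  have "emb ` ((\<lambda>v. v + m) ` S) = (\<lambda>y. emb m + y) ` (emb ` S)"
    by (auto simp: image_image emb_add add.commute)
  moreover have "(\<lambda>y. emb m + y) = (\<lambda>y. y + emb m)"
    by (simp add: fun_eq_iff add.commute)
  ultimately show ?thesis
    using convex_hull_translation[of "emb m" "emb ` S"] by simp
qed

lemma affine_independent_coefficients_unique:
  fixes e :: "'b \<Rightarrow> 'a::real_vector"
  assumes "finite S" "inj_on e S" "\<not> affine_dependent (e ` S)"
    and "sum c1 S = sum c2 S" "(\<Sum>s\<in>S. c1 s *\<^sub>R e s) = (\<Sum>s\<in>S. c2 s *\<^sub>R e s)" "s \<in> S"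
  shows "c1 s = c2 s"
proof (rule ccontr)
  assume "c1 s \<noteq> c2 s"
  define U where "U v = c1 (inv_into S e v) - c2 (inv_into S e v)" for v
  have U_e: "U (e s') = c1 s' - c2 s'" if "s' \<in> S" for s'
    using assms(2) that by (simp add: U_def)
  have "sum U (e ` S) = 0"
    using assms(4) by (simp add: sum.reindex[OF assms(2)] U_e sum_subtractf)
  moreover have "(\<Sum>v\<in>e ` S. U v *\<^sub>R v) = 0"
    using assms(5) by (simp add: sum.reindex[OF assms(2)] U_e scaleR_diff_left sum_subtractf)
  moreover have "U (e s) \<noteq> 0"
    using \<open>c1 s \<noteq> c2 s\<close> assms(6) by (simp add: U_e)
  ultimately show False
    using assms(1,3,6) affine_dependent_explicit_finite[of "e ` S"] by blast
qed

section \<open>Bounds on the data implied by (A1)\<close>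

lemma norm_diff_le_of_derivative_bound:
  fixes f :: "'a::real_normed_vector \<Rightarrow> 'b::real_normed_vector"
  assumes "\<And>x. (f has_derivative blinfun_apply (Df x)) (at x)" and "\<And>x. norm (Df x) \<le> B"
  shows "norm (f x - f y) \<le> B * norm (x - y)"
  using assms by (intro differentiable_bound[of UNIV f "\<lambda>x. blinfun_apply (Df x)"])
    (simp_all add: norm_blinfun.rep_eq[symmetric])

lemma second_difference_le_of_lipschitz_derivative:
  fixes f :: "'a::real_normed_vector \<Rightarrow> real"
  assumes deriv: "\<And>x. (f has_derivative blinfun_apply (Df x)) (at x)"
    and lip: "\<And>x y. norm (Df x - Df y) \<le> L * norm (x - y)"
    and "0 \<le> L"
  shows "f (x + y) + f (x - y) - 2 * f x \<le> 2 * L * (norm y)\<^sup>2"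
proof -
  define g where "g s = f (x + s *\<^sub>R y) + f (x - s *\<^sub>R y)" for s :: real
  define g' where "g' s ds = Df (x + s *\<^sub>R y) (ds *\<^sub>R y) - Df (x - s *\<^sub>R y) (ds *\<^sub>R y)" for s ds :: real
  have "(g has_derivative g' s) (at s within {0..1})" for s
    unfolding g_def g'_def
    by (auto intro!: derivative_eq_intros has_derivative_compose[OF _ deriv]
        simp: blinfun.minus_right)
  then obtain \<xi> where \<xi>: "\<xi> \<in> {0<..<1}" "g 1 - g 0 = g' \<xi> 1"
    using mvt_simple[of 0 1 g g'] by auto
  have "g' \<xi> 1 = (Df (x + \<xi> *\<^sub>R y) - Df (x - \<xi> *\<^sub>R y)) y"
    by (simp add: g'_def blinfun.diff_left)
  also have "\<dots> \<le> norm (Df (x + \<xi> *\<^sub>R y) - Df (x - \<xi> *\<^sub>R y)) * norm y"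
    using norm_blinfun[of "Df (x + \<xi> *\<^sub>R y) - Df (x - \<xi> *\<^sub>R y)" y] by simp
  also have "\<dots> \<le> L * norm ((2 * \<xi>) *\<^sub>R y) * norm y"
    using lip[of "x + \<xi> *\<^sub>R y" "x - \<xi> *\<^sub>R y"]
    by (intro mult_right_mono) (simp_all add: algebra_simps flip: scaleR_2)
  also have "\<dots> \<le> 2 * L * (norm y)\<^sup>2"
    using \<xi>(1) \<open>0 \<le> L\<close>
    by (simp add: power2_eq_square mult_left_le_one_le mult.assoc mult_left_mono)
  finally show ?thesis
    using \<xi>(2) by (simp add: g_def)
qed

definition bdd_lipschitz_semiconcave :: "real \<Rightarrow> ('a::real_normed_vector \<Rightarrow> real) \<Rightarrow> bool" where
  "bdd_lipschitz_semiconcave C f \<longleftrightarrow> (\<forall>x. \<bar>f x\<bar> \<le> C) \<and> C-lipschitz_on UNIV f \<and>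
     (\<forall>x y. f (x + y) + f (x - y) - 2 * f x \<le> C * (norm y)\<^sup>2)"

lemma A1_coupling_bounds:
  assumes "A1_coupling f"
  obtains C where "0 \<le> C" "\<And>m. P1 m \<Longrightarrow> bdd_lipschitz_semiconcave C (\<lambda>x. f x m)"
proof -
  obtain C0 Df D2f C1 where bdd: "\<And>x m. P1 m \<Longrightarrow> \<bar>f x m\<bar> \<le> C0"
    and deriv: "\<And>x m. P1 m \<Longrightarrow> ((\<lambda>y. f y m) has_derivative blinfun_apply (Df m x)) (at x)"
    and deriv2: "\<And>x m. P1 m \<Longrightarrow> (Df m has_derivative blinfun_apply (D2f m x)) (at x)"
    and norm_Df: "\<And>x m. P1 m \<Longrightarrow> norm (Df m x) \<le> C1"
    and norm_D2f: "\<And>x m. P1 m \<Longrightarrow> norm (D2f m x) \<le> C1"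
    using assms unfolding A1_coupling_def by metis
  define C where "C = \<bar>C0\<bar> + 2 * \<bar>C1\<bar>"
  have "bdd_lipschitz_semiconcave C (\<lambda>x. f x m)" if m: "P1 m" for m
    unfolding bdd_lipschitz_semiconcave_def
  proof (intro conjI allI lipschitz_onI)
    show "\<bar>f x m\<bar> \<le> C" for x
      using bdd[OF m, of x] by (simp add: C_def)
    show "dist (f x m) (f y m) \<le> C * dist x y" for x y
    proof -
      have "norm (f x m - f y m) \<le> C1 * norm (x - y)"
        using deriv[OF m] norm_Df[OF m] by (rule norm_diff_le_of_derivative_bound)
      also have "\<dots> \<le> C * norm (x - y)"
        by (intro mult_right_mono) (simp_all add: C_def)
      finally show ?thesis by (simp add: dist_norm)
    qed
    show "f (x + y) m + f (x - y) m - 2 * f x m \<le> C * (norm y)\<^sup>2" for x y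
    proof -
      have "norm (Df m a - Df m b) \<le> \<bar>C1\<bar> * norm (a - b)" for a b
        using norm_diff_le_of_derivative_bound[OF deriv2[OF m] norm_D2f[OF m], of a b]
        by (smt (verit) mult_right_mono norm_ge_zero)
      then have "f (x + y) m + f (x - y) m - 2 * f x m \<le> 2 * \<bar>C1\<bar> * (norm y)\<^sup>2"
        using deriv[OF m] by (intro second_difference_le_of_lipschitz_derivative) simp_all
      also have "\<dots> \<le> C * (norm y)\<^sup>2"
        by (intro mult_right_mono) (simp_all add: C_def)
      finally show ?thesis .
    qed
  qed (simp add: C_def)
  moreover have "0 \<le> C" by (simp add: C_def)
  ultimately show ?thesis using that by blast
qed

section \<open>Piecewise linear interpolation on the triangulation\<close>

lemma interp_rescale: "interp \<phi> \<rho> w x = interp \<phi> 1 w ((1 / \<rho>) *\<^sub>R x)"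
  by (simp add: interp_def)

lemma interp_diff: "interp \<phi> \<rho> (\<lambda>l. u l - v l) x = interp \<phi> \<rho> u x - interp \<phi> \<rho> v x"
  by (simp add: interp_def left_diff_distrib sum_subtractf)

lemma interp_second_difference:
  "interp \<phi> \<rho> (\<lambda>l. u l + v l - 2 * w l) x = interp \<phi> \<rho> u x + interp \<phi> \<rho> v x - 2 * interp \<phi> \<rho> w x"
  by (simp add: interp_def algebra_simps sum_subtractf sum.distrib sum_distrib_left)

lemma lipschitz_on_UNIV_of_closed_cover:
  fixes f :: "'a::real_normed_vector \<Rightarrow> 'b::metric_space"
  assumes cover: "\<Union>\<C> = UNIV"
    and closed: "\<And>C. C \<in> \<C> \<Longrightarrow> closed C"
    and lip: "\<And>C. C \<in> \<C> \<Longrightarrow> L-lipschitz_on C f"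
    and locally_finite: "\<And>R. finite {C\<in>\<C>. C \<inter> cball 0 R \<noteq> {}}"
  shows "L-lipschitz_on UNIV f"
proof (rule lipschitz_onI)
  obtain C0 where "C0 \<in> \<C>" using cover by blast
  then show L: "0 \<le> L" using lip lipschitz_on_nonneg by blast
  fix x y :: 'a
  define \<gamma> where "\<gamma> t = x + t *\<^sub>R (y - x)" for t :: real
  define \<I> where "\<I> = {C\<in>\<C>. C \<inter> cball 0 (norm x + norm y) \<noteq> {}}"
  have \<gamma>_dist: "dist (\<gamma> s) (\<gamma> t) = norm (y - x) * dist s t" for s t
  proof -
    have "\<gamma> s - \<gamma> t = (s - t) *\<^sub>R (y - x)" by (simp add: \<gamma>_def algebra_simps)
    then show ?thesis by (simp add: dist_norm dist_real_def)
  qed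
  have segment: "norm (\<gamma> t) \<le> norm x + norm y" if "t \<in> {0..1}" for t
  proof -
    have "norm (\<gamma> t) = norm ((1 - t) *\<^sub>R x + t *\<^sub>R y)"
      by (simp add: \<gamma>_def algebra_simps)
    also have "\<dots> \<le> (1 - t) * norm x + t * norm y"
      using that by (intro norm_triangle_le add_mono) simp_all
    also have "\<dots> \<le> norm x + norm y"
      using that mult_left_le_one_le[of "norm x" "1 - t"] mult_left_le_one_le[of "norm y" t]
      by simp
    finally show ?thesis .
  qed
  have "(L * norm (y - x))-lipschitz_on {0..1} (f \<circ> \<gamma>)"
  proof (rule lipschitz_on_closed_Union[where I = \<I> and U = "\<lambda>C. \<gamma> -` C"])
    show "(L * norm (y - x))-lipschitz_on (\<gamma> -` C) (f \<circ> \<gamma>)" if "C \<in> \<I>" for C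
    proof -
      have "(norm (y - x))-lipschitz_on (\<gamma> -` C) \<gamma>"
        by (rule lipschitz_onI) (simp_all add: \<gamma>_dist)
      moreover have "L-lipschitz_on (\<gamma> ` (\<gamma> -` C)) f"
        using lip[of C] that by (auto simp: \<I>_def intro: lipschitz_on_subset)
      ultimately show ?thesis by (rule lipschitz_on_compose)
    qed
    show "closed (\<gamma> -` C)" if "C \<in> \<I>" for C
      using that closed unfolding \<I>_def \<gamma>_def
      by (intro continuous_closed_vimage continuous_intros) auto
    show "{0..1} \<subseteq> (\<Union>C\<in>\<I>. \<gamma> -` C)"
      using cover segment by (fastforce simp: \<I>_def)
  qed (use locally_finite L in \<open>simp_all add: \<I>_def\<close>)
  from lipschitz_onD[OF this, of 0 1] show "dist (f x) (f y) \<le> L * dist x y"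
    by (simp add: \<gamma>_def dist_norm norm_minus_commute)
qed

locale barycentric_triangulation =
  fixes Tri :: "(int^'n) set set" and \<phi> :: "int^'n \<Rightarrow> real^'n \<Rightarrow> real"
  assumes regular: "regular_triangulation Tri" and barycentric: "barycentric_coords Tri \<phi>"
begin

lemma simplex_finite: "S \<in> Tri \<Longrightarrow> finite S"
  and simplex_card: "S \<in> Tri \<Longrightarrow> card S = CARD('n) + 1"
  and simplex_affine_independent: "S \<in> Tri \<Longrightarrow> \<not> affine_dependent (emb ` S)"
  using regular[unfolded regular_triangulation_def, THEN conjunct1] by blast+

lemma simplex_hulls_cover: "(\<Union>S\<in>Tri. convex hull (emb ` S)) = UNIV"
  using regular[unfolded regular_triangulation_def, THEN conjunct2, THEN conjunct1] .

lemma simplices_cover: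
  obtains S where "S \<in> Tri" "y \<in> convex hull (emb ` S)"
  using simplex_hulls_cover by (metis UNIV_I UN_E)

lemma closed_simplex_hull: "S \<in> Tri \<Longrightarrow> closed (convex hull (emb ` S))"
  by (simp add: compact_imp_closed compact_convex_hull finite_imp_compact simplex_finite)

lemma simplex_translate: "S \<in> Tri \<Longrightarrow> (\<lambda>v. v + m) ` S \<in> Tri"
  using regular[unfolded regular_triangulation_def, THEN conjunct2, THEN conjunct2,
      THEN conjunct2, THEN conjunct1]
  by blast

lemma simplex_diameter:
  obtains B where "0 \<le> B"
    "\<And>S a y. S \<in> Tri \<Longrightarrow> a \<in> S \<Longrightarrow> y \<in> convex hull (emb ` S) \<Longrightarrow> dist (emb a) y \<le> B"
proof -
  obtain B where B: "\<And>S a b. S \<in> Tri \<Longrightarrow> a \<in> S \<Longrightarrow> b \<in> S \<Longrightarrow> norm (emb a - emb b) \<le> B"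
    using regular[unfolded regular_triangulation_def, THEN conjunct2, THEN conjunct2,
        THEN conjunct2, THEN conjunct2]
    by blast
  have "dist (emb a) y \<le> max 0 B" if "S \<in> Tri" "a \<in> S" "y \<in> convex hull (emb ` S)" for S a y
  proof -
    have "emb ` S \<subseteq> cball (emb a) (max 0 B)"
      using B[OF that(1,2)] by (auto simp: dist_norm le_max_iff_disj)
    then have "convex hull (emb ` S) \<subseteq> cball (emb a) (max 0 B)"
      by (intro hull_minimal convex_cball)
    then show ?thesis using that(3) by auto
  qed
  then show ?thesis using that[of "max 0 B"] by simp
qed

lemma barycentric_coord_outside:
    "S \<in> Tri \<Longrightarrow> y \<in> convex hull (emb ` S) \<Longrightarrow> z \<notin> S \<Longrightarrow> \<phi> z y = 0"
  and barycentric_coord_nonneg: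
    "S \<in> Tri \<Longrightarrow> y \<in> convex hull (emb ` S) \<Longrightarrow> z \<in> S \<Longrightarrow> 0 \<le> \<phi> z y"
  and barycentric_coord_sum:
    "S \<in> Tri \<Longrightarrow> y \<in> convex hull (emb ` S) \<Longrightarrow> (\<Sum>z\<in>S. \<phi> z y) = 1"
  and barycentric_coord_combination:
    "S \<in> Tri \<Longrightarrow> y \<in> convex hull (emb ` S) \<Longrightarrow> (\<Sum>z\<in>S. \<phi> z y *\<^sub>R emb z) = y"
  using barycentric[unfolded barycentric_coords_def] by blast+

lemma barycentric_coord_translate: "\<phi> (z + m) (y + emb m) = \<phi> z y"
proof -
  obtain S where S: "S \<in> Tri" "y \<in> convex hull (emb ` S)" using simplices_cover .
  define S' where "S' = (\<lambda>v. v + m) ` S"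
  have S': "S' \<in> Tri" "y + emb m \<in> convex hull (emb ` S')"
    using simplex_translate[OF S(1)] S(2) by (auto simp: S'_def convex_hull_emb_translate)
  have inj: "inj_on (\<lambda>v. v + m) S" by (simp add: inj_on_def)
  show ?thesis
  proof (cases "z \<in> S")
    case False
    then have "z + m \<notin> S'" by (auto simp: S'_def)
    then show ?thesis
      using barycentric_coord_outside[OF S'] barycentric_coord_outside[OF S False] by simp
  next
    case True
    define c where "c z = \<phi> (z + m) (y + emb m)" for z
    have c_sum: "sum c S = 1"
      using barycentric_coord_sum[OF S'] by (simp add: S'_def sum.reindex[OF inj] c_def)
    have "(\<Sum>z\<in>S. c z *\<^sub>R emb z) + emb m = (\<Sum>z\<in>S. c z *\<^sub>R emb (z + m))"
      using c_sum by (simp add: emb_add scaleR_add_right sum.distrib flip: scaleR_sum_left)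
    also have "\<dots> = y + emb m"
      using barycentric_coord_combination[OF S'] by (simp add: S'_def sum.reindex[OF inj] c_def)
    finally have "(\<Sum>z\<in>S. c z *\<^sub>R emb z) = y" by simp
    then have "\<phi> z y = c z"
      using affine_independent_coefficients_unique[where e = emb, OF simplex_finite[OF S(1)]
          inj_on_subset[OF inj_emb] simplex_affine_independent[OF S(1)] _ _ True, of "\<lambda>z. \<phi> z y" c]
        barycentric_coord_sum[OF S] barycentric_coord_combination[OF S] c_sum
      by simp
    then show ?thesis by (simp add: c_def)
  qed
qed

lemma interp_eq_simplex_sum:
  assumes "S \<in> Tri" "y \<in> convex hull (emb ` S)"
  shows "interp \<phi> 1 w y = (\<Sum>z\<in>S. w z * \<phi> z y)"
proof -
  have "{z. \<phi> z y \<noteq> 0} \<subseteq> S" using barycentric_coord_outside[OF assms] by blast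
  then show ?thesis unfolding interp_def
    by (simp, intro sum.mono_neutral_left simplex_finite[OF assms(1)]) auto
qed

lemma interp_le:
  assumes "\<And>l. w l \<le> D"
  shows "interp \<phi> \<rho> w x \<le> D"
proof -
  obtain S where S: "S \<in> Tri" "(1 / \<rho>) *\<^sub>R x \<in> convex hull (emb ` S)" using simplices_cover .
  have "interp \<phi> \<rho> w x = (\<Sum>z\<in>S. w z * \<phi> z ((1 / \<rho>) *\<^sub>R x))"
    by (simp add: interp_rescale[of \<phi> \<rho>] interp_eq_simplex_sum[OF S])
  also have "\<dots> \<le> (\<Sum>z\<in>S. D * \<phi> z ((1 / \<rho>) *\<^sub>R x))"
    using assms barycentric_coord_nonneg[OF S] by (intro sum_mono mult_right_mono)
  also have "\<dots> = D"
    using barycentric_coord_sum[OF S] by (simp flip: sum_distrib_left)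
  finally show ?thesis .
qed

lemma interp_translate:
  assumes "0 < \<rho>"
  shows "interp \<phi> \<rho> w (x + gp \<rho> m) = interp \<phi> \<rho> (\<lambda>l. w (l + m)) x"
proof -
  let ?y = "(1 / \<rho>) *\<^sub>R x"
  obtain S where S: "S \<in> Tri" "?y \<in> convex hull (emb ` S)" using simplices_cover .
  define S' where "S' = (\<lambda>v. v + m) ` S"
  have S': "S' \<in> Tri" "?y + emb m \<in> convex hull (emb ` S')"
    using simplex_translate[OF S(1)] S(2) by (auto simp: S'_def convex_hull_emb_translate)
  have inj: "inj_on (\<lambda>v. v + m) S" by (simp add: inj_on_def)
  have "(1 / \<rho>) *\<^sub>R (x + gp \<rho> m) = ?y + emb m"
    using assms by (simp add: gp_def scaleR_add_right)
  then have "interp \<phi> \<rho> w (x + gp \<rho> m) = (\<Sum>z\<in>S'. w z * \<phi> z (?y + emb m))"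
    by (simp add: interp_rescale[of \<phi> \<rho>] interp_eq_simplex_sum[OF S'])
  also have "\<dots> = (\<Sum>z\<in>S. w (z + m) * \<phi> z ?y)"
    by (simp add: S'_def sum.reindex[OF inj] barycentric_coord_translate)
  also have "\<dots> = interp \<phi> \<rho> (\<lambda>l. w (l + m)) x"
    by (simp add: interp_rescale[of \<phi> \<rho>] interp_eq_simplex_sum[OF S])
  finally show ?thesis .
qed

lemma barycentric_coord_affine:
  assumes S: "S \<in> Tri" and z: "z \<in> S"
  obtains g where "linear g"
    "\<And>y y'. y \<in> convex hull (emb ` S) \<Longrightarrow> y' \<in> convex hull (emb ` S) \<Longrightarrow> \<phi> z y - \<phi> z y' = g (y - y')"
proof -
  have "card (S - {z}) = CARD('n)"
    using simplex_card[OF S] simplex_finite[OF S] z by simp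
  then obtain z0 where z0: "z0 \<in> S" "z0 \<noteq> z"
    by (metis card.empty Diff_iff all_not_in_conv insertI1 zero_less_card_finite less_irrefl)
  \<comment> \<open>The edge vectors at a vertex \<open>z0 \<noteq> z\<close> form a basis, and \<open>\<phi> z\<close> is the dual
    functional of \<open>emb z - emb z0\<close>.\<close>
  define v where "v a = emb a - emb z0" for a
  have "(\<lambda>x. - emb z0 + x) ` (emb ` S - {emb z0}) = v ` (S - {z0})"
    by (auto simp: v_def inj_eq[OF inj_emb])
  then have "independent (v ` (S - {z0}))"
    using simplex_affine_independent[OF S] affine_dependent_iff_dependent2[of "emb z0" "emb ` S"] z0(1)
    by simp
  then obtain g :: "real^'n \<Rightarrow> real"
    where g: "linear g" "\<And>x. x \<in> v ` (S - {z0}) \<Longrightarrow> g x = (if x = v z then 1 else 0)"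
    using linear_independent_extend[OF \<open>independent _\<close>, of "\<lambda>x. if x = v z then 1 else 0"] by blast
  have g_v: "g (v a) = (if a = z then 1 else 0)" if "a \<in> S" for a
  proof (cases "a = z0")
    case True
    then show ?thesis using z0(2) linear_0[OF g(1)] by (simp add: v_def)
  next
    case False
    then show ?thesis using g(2)[of "v a"] that by (simp add: v_def inj_eq[OF inj_emb])
  qed
  show ?thesis
  proof (rule that[OF g(1)])
    fix y y' assume y: "y \<in> convex hull (emb ` S)" and y': "y' \<in> convex hull (emb ` S)"
    define d where "d a = \<phi> a y - \<phi> a y'" for a
    have "(\<Sum>a\<in>S. d a *\<^sub>R v a) = (\<Sum>a\<in>S. d a *\<^sub>R emb a) - (\<Sum>a\<in>S. d a) *\<^sub>R emb z0"
      by (simp add: v_def scaleR_diff_right sum_subtractf scaleR_sum_left)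
    also have "\<dots> = y - y'"
      using barycentric_coord_sum[OF S y] barycentric_coord_sum[OF S y']
        barycentric_coord_combination[OF S y] barycentric_coord_combination[OF S y']
      by (simp add: d_def scaleR_diff_left sum_subtractf)
    finally have sum_v: "(\<Sum>a\<in>S. d a *\<^sub>R v a) = y - y'" .
    have "g (y - y') = (\<Sum>a\<in>S. g (d a *\<^sub>R v a))"
      unfolding sum_v[symmetric] by (rule linear_sum[OF g(1)])
    also have "\<dots> = (\<Sum>a\<in>S. d a * g (v a))"
      by (simp add: linear_scale[OF g(1)])
    also have "\<dots> = (\<Sum>a\<in>S. if a = z then d a else 0)"
      by (intro sum.cong) (simp_all add: g_v)
    also have "\<dots> = d z"
      using z simplex_finite[OF S] by simp
    finally show "\<phi> z y - \<phi> z y' = g (y - y')" by (simp add: d_def)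
  qed
qed

lemma finite_simplices_meeting_ball: "finite {S\<in>Tri. convex hull (emb ` S) \<inter> cball 0 R \<noteq> {}}"
proof -
  obtain B where "0 \<le> B"
    and B: "\<And>S a y. S \<in> Tri \<Longrightarrow> a \<in> S \<Longrightarrow> y \<in> convex hull (emb ` S) \<Longrightarrow> dist (emb a) y \<le> B"
    by (rule simplex_diameter) (rule that)
  have "{S\<in>Tri. convex hull (emb ` S) \<inter> cball 0 R \<noteq> {}} \<subseteq> Pow {a. norm (emb a) \<le> R + B}"
  proof
    fix S assume "S \<in> {S\<in>Tri. convex hull (emb ` S) \<inter> cball 0 R \<noteq> {}}"
    then obtain y where S: "S \<in> Tri" and y: "y \<in> convex hull (emb ` S)" "norm y \<le> R"
      by auto
    have "norm (emb a) \<le> R + B" if "a \<in> S" for a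
      using B[OF S that y(1)] y(2) norm_triangle_sub[of "emb a" y] by (simp add: dist_norm)
    then show "S \<in> Pow {a. norm (emb a) \<le> R + B}" by blast
  qed
  moreover have "finite (Pow {a::int^'n. norm (emb a) \<le> R + B})"
    by (simp add: finite_lattice_points)
  ultimately show ?thesis by (rule finite_subset)
qed

lemma barycentric_coord_lipschitz_on_simplex:
  assumes "S \<in> Tri" "z \<in> S"
  shows "\<exists>K. \<forall>y\<in>convex hull (emb ` S). \<forall>y'\<in>convex hull (emb ` S).
    \<bar>\<phi> z y - \<phi> z y'\<bar> \<le> K * dist y y'"
proof -
  obtain g where g: "linear g"
    "\<And>y y'. y \<in> convex hull (emb ` S) \<Longrightarrow> y' \<in> convex hull (emb ` S) \<Longrightarrow> \<phi> z y - \<phi> z y' = g (y - y')"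
    by (rule barycentric_coord_affine[OF assms]) (rule that)
  obtain K where K: "\<And>x. norm (g x) \<le> K * norm x"
    using linear_bounded[OF g(1)] by blast
  have "\<bar>\<phi> z y - \<phi> z y'\<bar> \<le> K * dist y y'"
    if "y \<in> convex hull (emb ` S)" "y' \<in> convex hull (emb ` S)" for y y'
    using K[of "y - y'"] g(2)[OF that] by (simp add: dist_norm)
  then show ?thesis by blast
qed

lemma barycentric_coord_lipschitz:
  obtains K where "0 \<le> K"
    "\<And>S z y y'. S \<in> Tri \<Longrightarrow> z \<in> S \<Longrightarrow> y \<in> convex hull (emb ` S) \<Longrightarrow> y' \<in> convex hull (emb ` S) \<Longrightarrow>
       \<bar>\<phi> z y - \<phi> z y'\<bar> \<le> K * dist y y'"
proof -
  \<comment> \<open>By translation invariance only the finitely many simplices containing \<open>0\<close> matter.\<close>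
  define \<S> where "\<S> = {S\<in>Tri. 0 \<in> S}"
  have "emb 0 \<in> convex hull (emb ` S) \<inter> cball 0 0" if "S \<in> \<S>" for S
    using that hull_inc[OF imageI[of 0 S emb]] by (simp add: \<S>_def emb_zero)
  then have "\<S> \<subseteq> {S\<in>Tri. convex hull (emb ` S) \<inter> cball 0 0 \<noteq> {}}"
    unfolding \<S>_def by blast
  then have fin: "finite \<S>"
    using finite_simplices_meeting_ball by (rule finite_subset)
  have "\<forall>S\<in>\<S>. \<exists>K. \<forall>y\<in>convex hull (emb ` S). \<forall>y'\<in>convex hull (emb ` S).
      \<bar>\<phi> 0 y - \<phi> 0 y'\<bar> \<le> K * dist y y'"
    unfolding \<S>_def using barycentric_coord_lipschitz_on_simplex by blast
  then obtain K where K: "\<forall>S\<in>\<S>. \<forall>y\<in>convex hull (emb ` S). \<forall>y'\<in>convex hull (emb ` S).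
      \<bar>\<phi> 0 y - \<phi> 0 y'\<bar> \<le> K S * dist y y'"
    by (rule bchoice[THEN exE]) (rule that)
  define K_max where "K_max = (\<Sum>S\<in>\<S>. \<bar>K S\<bar>)"
  have "\<bar>\<phi> z y - \<phi> z y'\<bar> \<le> K_max * dist y y'"
    if S: "S \<in> Tri" and z: "z \<in> S" and y: "y \<in> convex hull (emb ` S)" and y': "y' \<in> convex hull (emb ` S)"
    for S z y y'
  proof -
    define S' where "S' = (\<lambda>v. v + - z) ` S"
    have S': "S' \<in> \<S>"
      using simplex_translate[OF S, of "- z"] z by (auto simp: S'_def \<S>_def)
    have "\<bar>\<phi> z y - \<phi> z y'\<bar> = \<bar>\<phi> 0 (y + emb (- z)) - \<phi> 0 (y' + emb (- z))\<bar>"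
      using barycentric_coord_translate[of z "- z"] by simp
    also have "\<dots> \<le> K S' * dist y y'"
    proof -
      have "y + emb (- z) \<in> convex hull (emb ` S')" "y' + emb (- z) \<in> convex hull (emb ` S')"
        using y y' unfolding S'_def convex_hull_emb_translate by blast+
      from K[rule_format, OF S' this] show ?thesis by (simp add: dist_norm)
    qed
    also have "\<dots> \<le> K_max * dist y y'"
      unfolding K_max_def
      by (intro mult_right_mono order_trans[OF abs_ge_self member_le_sum[OF S']] fin) simp_all
    finally show ?thesis .
  qed
  moreover have "0 \<le> K_max" by (simp add: K_max_def sum_nonneg)
  ultimately show ?thesis using that by blast
qed

lemma interp_lipschitz_on_simplex:
  obtains C where "0 \<le> C"
    "\<And>w M S. 0 \<le> M \<Longrightarrow> (\<And>a b. \<bar>w a - w b\<bar> \<le> M * dist (emb a) (emb b)) \<Longrightarrow> S \<in> Tri \<Longrightarrow>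
       (C * M)-lipschitz_on (convex hull (emb ` S)) (interp \<phi> 1 w)"
proof -
  obtain K where K: "0 \<le> K"
    "\<And>S z y y'. S \<in> Tri \<Longrightarrow> z \<in> S \<Longrightarrow> y \<in> convex hull (emb ` S) \<Longrightarrow> y' \<in> convex hull (emb ` S) \<Longrightarrow>
       \<bar>\<phi> z y - \<phi> z y'\<bar> \<le> K * dist y y'"
    by (rule barycentric_coord_lipschitz) (rule that)
  obtain B where B: "0 \<le> B"
    "\<And>S a y. S \<in> Tri \<Longrightarrow> a \<in> S \<Longrightarrow> y \<in> convex hull (emb ` S) \<Longrightarrow> dist (emb a) y \<le> B"
    by (rule simplex_diameter) (rule that)
  define C where "C = real (CARD('n) + 1) * B * K"
  have "(C * M)-lipschitz_on (convex hull (emb ` S)) (interp \<phi> 1 w)"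
    if M: "0 \<le> M" and w: "\<And>a b. \<bar>w a - w b\<bar> \<le> M * dist (emb a) (emb b)" and S: "S \<in> Tri" for w M S
  proof (rule lipschitz_onI)
    fix p q assume p: "p \<in> convex hull (emb ` S)" and q: "q \<in> convex hull (emb ` S)"
    then obtain z0 where z0: "z0 \<in> S" by fastforce
    have "interp \<phi> 1 w p - interp \<phi> 1 w q = (\<Sum>z\<in>S. w z * (\<phi> z p - \<phi> z q))"
      by (simp add: interp_eq_simplex_sum[OF S p] interp_eq_simplex_sum[OF S q]
          right_diff_distrib sum_subtractf)
    also have "\<dots> = (\<Sum>z\<in>S. (w z - w z0) * (\<phi> z p - \<phi> z q))"
      using barycentric_coord_sum[OF S p] barycentric_coord_sum[OF S q]
      by (simp add: left_diff_distrib sum_subtractf right_diff_distrib flip: sum_distrib_left)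
    finally have "dist (interp \<phi> 1 w p) (interp \<phi> 1 w q) \<le> (\<Sum>z\<in>S. \<bar>w z - w z0\<bar> * \<bar>\<phi> z p - \<phi> z q\<bar>)"
      by (simp add: dist_real_def sum_abs[THEN order_trans] abs_mult)
    also have "\<dots> \<le> (\<Sum>z\<in>S. (M * B) * (K * dist p q))"
    proof (intro sum_mono mult_mono)
      fix z assume z: "z \<in> S"
      show "\<bar>w z - w z0\<bar> \<le> M * B"
        using w[of z z0] B(2)[OF S z hull_inc[OF imageI[OF z0]]] M
        by (meson mult_left_mono order_trans)
      show "\<bar>\<phi> z p - \<phi> z q\<bar> \<le> K * dist p q" using K(2)[OF S z p q] .
    qed (use M B(1) in simp_all)
    also have "\<dots> = C * M * dist p q"
      by (simp add: C_def simplex_card[OF S])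
    finally show "dist (interp \<phi> 1 w p) (interp \<phi> 1 w q) \<le> C * M * dist p q" .
  qed (simp add: C_def B(1) K(1) M)
  moreover have "0 \<le> C" by (simp add: C_def B(1) K(1))
  ultimately show ?thesis using that by blast
qed

lemma interp_lipschitz:
  obtains C where "0 \<le> C"
    "\<And>\<rho> w M. 0 < \<rho> \<Longrightarrow> 0 \<le> M \<Longrightarrow> (\<And>a b. \<bar>w a - w b\<bar> \<le> M * dist (gp \<rho> a) (gp \<rho> b)) \<Longrightarrow>
       (C * M)-lipschitz_on UNIV (interp \<phi> \<rho> w)"
proof -
  obtain C where C: "0 \<le> C"
    "\<And>w M S. 0 \<le> M \<Longrightarrow> (\<And>a b. \<bar>w a - w b\<bar> \<le> M * dist (emb a) (emb b)) \<Longrightarrow> S \<in> Tri \<Longrightarrow>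
       (C * M)-lipschitz_on (convex hull (emb ` S)) (interp \<phi> 1 w)"
    using interp_lipschitz_on_simplex by metis
  let ?\<C> = "(\<lambda>S. convex hull (emb ` S)) ` Tri"
  have unit: "(C * M)-lipschitz_on UNIV (interp \<phi> 1 w)"
    if M: "0 \<le> M" and w: "\<And>a b. \<bar>w a - w b\<bar> \<le> M * dist (emb a) (emb b)" for w M
  proof (rule lipschitz_on_UNIV_of_closed_cover[where \<C> = ?\<C>])
    show "\<Union>?\<C> = UNIV" by (rule simplex_hulls_cover)
    show "closed X" and "(C * M)-lipschitz_on X (interp \<phi> 1 w)" if "X \<in> ?\<C>" for X
      using that closed_simplex_hull C(2)[OF M w] by blast+
    have "{X \<in> ?\<C>. X \<inter> cball 0 R \<noteq> {}} = (\<lambda>S. convex hull (emb ` S)) ` {S\<in>Tri. convex hull (emb ` S) \<inter> cball 0 R \<noteq> {}}"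
      for R by blast
    then show "finite {X \<in> ?\<C>. X \<inter> cball 0 R \<noteq> {}}" for R
      using finite_simplices_meeting_ball by simp
  qed
  have "(C * M)-lipschitz_on UNIV (interp \<phi> \<rho> w)"
    if \<rho>: "0 < \<rho>" and M: "0 \<le> M" and w: "\<And>a b. \<bar>w a - w b\<bar> \<le> M * dist (gp \<rho> a) (gp \<rho> b)" for \<rho> w M
  proof -
    have "\<bar>w a - w b\<bar> \<le> (M * \<rho>) * dist (emb a) (emb b)" for a b
      using w[of a b] \<rho> by (simp add: gp_def dist_norm flip: scaleR_diff_right)
    then have interp_unit: "(C * (M * \<rho>))-lipschitz_on UNIV (interp \<phi> 1 w)"
      using unit M \<rho> by simp
    have scale: "(1 / \<rho>)-lipschitz_on UNIV (\<lambda>x::real^'n. (1 / \<rho>) *\<^sub>R x)"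
      using lipschitz_on_cmult[OF lipschitz_on_id, of "1 / \<rho>" UNIV] \<rho> by simp
    have "(C * (M * \<rho>) * (1 / \<rho>))-lipschitz_on UNIV (\<lambda>x. interp \<phi> 1 w ((1 / \<rho>) *\<^sub>R x))"
      by (rule lipschitz_on_compose2[OF scale lipschitz_on_subset[OF interp_unit subset_UNIV]])
    then show ?thesis using \<rho> by (simp add: interp_rescale[of \<phi> \<rho>])
  qed
  with C(1) that show ?thesis by blast
qed

end

section \<open>Propagation of the bounds through the scheme\<close>

lemma cINF_le_cINF_add:
  fixes f g :: "'a \<Rightarrow> real"
  assumes "bdd_below (range f)" and "\<And>x. f x \<le> g x + D"
  shows "(INF x. f x) \<le> (INF x. g x) + D"
proof -
  have "(INF x. f x) - D \<le> (INF x. g x)"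
  proof (rule cINF_greatest)
    fix x
    show "(INF x. f x) - D \<le> g x"
      using cINF_lower[OF assms(1) UNIV_I, of x] assms(2)[of x] by simp
  qed simp
  then show ?thesis by simp
qed

lemma cINF_second_difference_le:
  fixes f g k :: "'a \<Rightarrow> real"
  assumes "bdd_below (range f)" "bdd_below (range g)" and "\<And>x. f x + g x - 2 * k x \<le> D"
  shows "(INF x. f x) + (INF x. g x) - 2 * (INF x. k x) \<le> D"
proof -
  have "((INF x. f x) + (INF x. g x) - D) / 2 \<le> (INF x. k x)"
  proof (rule cINF_greatest)
    fix x
    show "((INF x. f x) + (INF x. g x) - D) / 2 \<le> k x"
      using cINF_lower[OF assms(1) UNIV_I, of x] cINF_lower[OF assms(2) UNIV_I, of x] assms(3)[of x]
      by simp
  qed simp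
  then show ?thesis by simp
qed

definition diffusion_mean ::
    "(int^'n \<Rightarrow> real^'n \<Rightarrow> real) \<Rightarrow> real \<Rightarrow> real \<Rightarrow> (real \<Rightarrow> real^'r^'n) \<Rightarrow> real
      \<Rightarrow> (int^'n \<Rightarrow> real) \<Rightarrow> real^'n \<Rightarrow> real" where
  "diffusion_mean \<phi> \<rho> h \<sigma> t w y = (1 / (2 * real CARD('r))) *
     (\<Sum>l\<in>(UNIV :: 'r set). interp \<phi> \<rho> w (y + sqrt (h * real CARD('r)) *\<^sub>R column l (\<sigma> t))
        + interp \<phi> \<rho> w (y - sqrt (h * real CARD('r)) *\<^sub>R column l (\<sigma> t)))"

definition sl_cost ::
    "(int^'n \<Rightarrow> real^'n \<Rightarrow> real) \<Rightarrow> real \<Rightarrow> real \<Rightarrow> (real \<Rightarrow> real^'r^'n) \<Rightarrow> real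
      \<Rightarrow> (real^'n \<Rightarrow> real) \<Rightarrow> (int^'n \<Rightarrow> real) \<Rightarrow> int^'n \<Rightarrow> real^'n \<Rightarrow> real" where
  "sl_cost \<phi> \<rho> h \<sigma> t f w i \<alpha> =
     diffusion_mean \<phi> \<rho> h \<sigma> t w (gp \<rho> i - h *\<^sub>R \<alpha>) + h / 2 * (norm \<alpha>)\<^sup>2 + h * f (gp \<rho> i)"

definition sl_step ::
    "(int^'n \<Rightarrow> real^'n \<Rightarrow> real) \<Rightarrow> real \<Rightarrow> real \<Rightarrow> (real \<Rightarrow> real^'r^'n) \<Rightarrow> real
      \<Rightarrow> (real^'n \<Rightarrow> real) \<Rightarrow> (int^'n \<Rightarrow> real) \<Rightarrow> int^'n \<Rightarrow> real" where
  "sl_step \<phi> \<rho> h \<sigma> t f w i = (INF \<alpha>. sl_cost \<phi> \<rho> h \<sigma> t f w i \<alpha>)"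

lemma scheme_vals_Suc:
  "scheme_vals \<phi> F G \<sigma> T \<rho> h N \<mu> (Suc m) =
     sl_step \<phi> \<rho> h \<sigma> (real (N - Suc m) * h) (\<lambda>x. F x (\<mu> (real (N - Suc m) * h)))
       (scheme_vals \<phi> F G \<sigma> T \<rho> h N \<mu> m)"
  by (simp add: fun_eq_iff sl_step_def sl_cost_def diffusion_mean_def Let_def)

lemma diffusion_mean_diff:
  "diffusion_mean \<phi> \<rho> h \<sigma> t (\<lambda>l. u l - v l) y = diffusion_mean \<phi> \<rho> h \<sigma> t u y - diffusion_mean \<phi> \<rho> h \<sigma> t v y"
  by (simp add: diffusion_mean_def interp_diff sum_subtractf algebra_simps)

lemma diffusion_mean_second_difference:
  "diffusion_mean \<phi> \<rho> h \<sigma> t (\<lambda>l. u l + v l - 2 * w l) y =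
     diffusion_mean \<phi> \<rho> h \<sigma> t u y + diffusion_mean \<phi> \<rho> h \<sigma> t v y - 2 * diffusion_mean \<phi> \<rho> h \<sigma> t w y"
  unfolding diffusion_mean_def interp_second_difference
  by (simp add: sum.distrib sum_subtractf sum_distrib_left ring_distribs)

text \<open>The lower bound is not one of the estimates; it only keeps the infima in \<open>sl_step\<close> finite.\<close>

definition lipschitz_semiconcave_grid :: "real \<Rightarrow> real \<Rightarrow> (int^'n \<Rightarrow> real) \<Rightarrow> bool" where
  "lipschitz_semiconcave_grid \<rho> C w \<longleftrightarrow> (\<forall>l. - C \<le> w l) \<and>
     (\<forall>l q. w (l + q) - w l \<le> C * norm (gp \<rho> q)) \<and>
     (\<forall>l j. w (l + j) + w (l - j) - 2 * w l \<le> C * (norm (gp \<rho> j))\<^sup>2)"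

lemma lipschitz_semiconcave_grid_mono:
  assumes "lipschitz_semiconcave_grid \<rho> C w" "C \<le> C'"
  shows "lipschitz_semiconcave_grid \<rho> C' w"
  using assms unfolding lipschitz_semiconcave_grid_def
  by (smt (verit) mult_right_mono norm_ge_zero zero_le_power2)

lemma lipschitz_semiconcave_grid_sample:
  assumes "bdd_lipschitz_semiconcave C g"
  shows "lipschitz_semiconcave_grid \<rho> C (\<lambda>i. g (gp \<rho> i))"
  unfolding lipschitz_semiconcave_grid_def
proof (intro conjI allI)
  fix l q j
  have "\<bar>g (gp \<rho> l)\<bar> \<le> C"
    using assms by (simp add: bdd_lipschitz_semiconcave_def)
  then show "- C \<le> g (gp \<rho> l)" by linarith
  show "g (gp \<rho> (l + q)) - g (gp \<rho> l) \<le> C * norm (gp \<rho> q)"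
    using assms lipschitz_on_normD[of C UNIV g "gp \<rho> l + gp \<rho> q" "gp \<rho> l"]
    by (simp add: bdd_lipschitz_semiconcave_def gp_add)
  show "g (gp \<rho> (l + j)) + g (gp \<rho> (l - j)) - 2 * g (gp \<rho> l) \<le> C * (norm (gp \<rho> j))\<^sup>2"
    using assms by (simp add: bdd_lipschitz_semiconcave_def gp_add gp_diff)
qed

lemma lipschitz_semiconcave_grid_abs_diff:
  assumes "lipschitz_semiconcave_grid \<rho> C w"
  shows "\<bar>w a - w b\<bar> \<le> C * dist (gp \<rho> a) (gp \<rho> b)"
proof -
  have "w (b + (a - b)) - w b \<le> C * norm (gp \<rho> (a - b))"
    and "w (a + (b - a)) - w a \<le> C * norm (gp \<rho> (b - a))"
    using assms unfolding lipschitz_semiconcave_grid_def by blast+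
  then show ?thesis
    by (simp add: gp_diff dist_norm norm_minus_commute)
qed

context barycentric_triangulation
begin

lemma diffusion_mean_le:
  fixes \<sigma> :: "real \<Rightarrow> real^'r^'n"
  assumes "\<And>l. w l \<le> D"
  shows "diffusion_mean \<phi> \<rho> h \<sigma> t w y \<le> D"
proof -
  let ?r = "real CARD('r)"
  have "(\<Sum>l\<in>(UNIV :: 'r set). interp \<phi> \<rho> w (y + sqrt (h * ?r) *\<^sub>R column l (\<sigma> t))
        + interp \<phi> \<rho> w (y - sqrt (h * ?r) *\<^sub>R column l (\<sigma> t))) \<le> (\<Sum>l\<in>(UNIV :: 'r set). D + D)"
    using assms by (intro sum_mono add_mono interp_le)
  then show ?thesis
    by (simp add: diffusion_mean_def field_simps)
qed

lemma diffusion_mean_ge: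
  fixes \<sigma> :: "real \<Rightarrow> real^'r^'n"
  assumes "\<And>l. D \<le> w l"
  shows "D \<le> diffusion_mean \<phi> \<rho> h \<sigma> t w y"
proof -
  have "diffusion_mean \<phi> \<rho> h \<sigma> t (\<lambda>l. 0 - w l) y \<le> - D"
    using assms by (intro diffusion_mean_le) simp
  moreover have "diffusion_mean \<phi> \<rho> h \<sigma> t (\<lambda>l. 0) y = 0"
    by (simp add: diffusion_mean_def interp_def)
  ultimately show ?thesis
    using diffusion_mean_diff[of \<phi> \<rho> h \<sigma> t "\<lambda>l. 0" w y] by simp
qed

lemma diffusion_mean_translate:
  assumes "0 < \<rho>"
  shows "diffusion_mean \<phi> \<rho> h \<sigma> t w (y + gp \<rho> q) = diffusion_mean \<phi> \<rho> h \<sigma> t (\<lambda>l. w (l + q)) y"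
proof -
  have "y + gp \<rho> q + c = (y + c) + gp \<rho> q" "y + gp \<rho> q - c = (y - c) + gp \<rho> q" for c
    by (simp_all add: algebra_simps)
  then show ?thesis
    by (simp only: diffusion_mean_def interp_translate[OF assms])
qed

lemma sl_cost_lower_bound:
  fixes \<sigma> :: "real \<Rightarrow> real^'r^'n"
  assumes "0 \<le> h" "\<And>x. \<bar>f x\<bar> \<le> Cf" "\<And>l. c \<le> w l"
  shows "c - h * Cf \<le> sl_cost \<phi> \<rho> h \<sigma> t f w i \<alpha>"
proof -
  have "c \<le> diffusion_mean \<phi> \<rho> h \<sigma> t w (gp \<rho> i - h *\<^sub>R \<alpha>)"
    using assms(3) by (rule diffusion_mean_ge)
  moreover have "- Cf \<le> f (gp \<rho> i)"
    using assms(2)[of "gp \<rho> i"] by (simp add: abs_le_iff)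
  then have "h * - Cf \<le> h * f (gp \<rho> i)"
    using assms(1) by (rule mult_left_mono)
  moreover have "0 \<le> h / 2 * (norm \<alpha>)\<^sup>2"
    using assms(1) by simp
  ultimately show ?thesis
    by (simp add: sl_cost_def)
qed

lemma sl_cost_shift_le:
  fixes \<sigma> :: "real \<Rightarrow> real^'r^'n"
  assumes "0 < \<rho>" "0 \<le> h" "bdd_lipschitz_semiconcave Cf f" "\<And>l. w (l + q) - w l \<le> D"
  shows "sl_cost \<phi> \<rho> h \<sigma> t f w (i + q) \<alpha> \<le> sl_cost \<phi> \<rho> h \<sigma> t f w i \<alpha> + (D + h * Cf * norm (gp \<rho> q))"
proof -
  let ?y = "gp \<rho> i - h *\<^sub>R \<alpha>"
  have "diffusion_mean \<phi> \<rho> h \<sigma> t w (?y + gp \<rho> q) - diffusion_mean \<phi> \<rho> h \<sigma> t w ?y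
      = diffusion_mean \<phi> \<rho> h \<sigma> t (\<lambda>l. w (l + q) - w l) ?y"
    by (simp add: diffusion_mean_translate[OF assms(1)] diffusion_mean_diff)
  also have "\<dots> \<le> D"
    using assms(4) by (rule diffusion_mean_le)
  finally have mean: "diffusion_mean \<phi> \<rho> h \<sigma> t w (?y + gp \<rho> q) \<le> diffusion_mean \<phi> \<rho> h \<sigma> t w ?y + D"
    by simp
  have "f (gp \<rho> i + gp \<rho> q) - f (gp \<rho> i) \<le> Cf * norm (gp \<rho> q)"
    using assms(3) lipschitz_on_normD[of Cf UNIV f "gp \<rho> i + gp \<rho> q" "gp \<rho> i"]
    by (simp add: bdd_lipschitz_semiconcave_def)
  then have f_step: "h * f (gp \<rho> (i + q)) \<le> h * f (gp \<rho> i) + h * Cf * norm (gp \<rho> q)"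
    using assms(2) mult_left_mono by (fastforce simp: algebra_simps gp_add)
  have shift: "gp \<rho> (i + q) - h *\<^sub>R \<alpha> = ?y + gp \<rho> q"
    by (simp add: gp_add algebra_simps)
  show ?thesis
    using mean f_step unfolding sl_cost_def shift by linarith
qed

lemma sl_cost_second_difference_le:
  fixes \<sigma> :: "real \<Rightarrow> real^'r^'n"
  assumes "0 < \<rho>" "0 \<le> h" "bdd_lipschitz_semiconcave Cf f" "\<And>l. w (l + j) + w (l - j) - 2 * w l \<le> D"
  shows "sl_cost \<phi> \<rho> h \<sigma> t f w (i + j) \<alpha> + sl_cost \<phi> \<rho> h \<sigma> t f w (i - j) \<alpha>
      - 2 * sl_cost \<phi> \<rho> h \<sigma> t f w i \<alpha> \<le> D + h * Cf * (norm (gp \<rho> j))\<^sup>2"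
proof -
  let ?y = "gp \<rho> i - h *\<^sub>R \<alpha>"
  have "diffusion_mean \<phi> \<rho> h \<sigma> t w (?y + gp \<rho> j) + diffusion_mean \<phi> \<rho> h \<sigma> t w (?y + gp \<rho> (- j))
      - 2 * diffusion_mean \<phi> \<rho> h \<sigma> t w ?y
      = diffusion_mean \<phi> \<rho> h \<sigma> t (\<lambda>l. w (l + j) + w (l + - j) - 2 * w l) ?y"
    by (simp add: diffusion_mean_translate[OF assms(1)] diffusion_mean_second_difference)
  also have "\<dots> \<le> D"
    using assms(4) by (intro diffusion_mean_le) simp
  finally have mean: "diffusion_mean \<phi> \<rho> h \<sigma> t w (?y + gp \<rho> j) + diffusion_mean \<phi> \<rho> h \<sigma> t w (?y + gp \<rho> (- j))
      - 2 * diffusion_mean \<phi> \<rho> h \<sigma> t w ?y \<le> D" .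
  have "f (gp \<rho> i + gp \<rho> j) + f (gp \<rho> i - gp \<rho> j) - 2 * f (gp \<rho> i) \<le> Cf * (norm (gp \<rho> j))\<^sup>2"
    using assms(3) by (simp add: bdd_lipschitz_semiconcave_def)
  then have f_step: "h * f (gp \<rho> (i + j)) + h * f (gp \<rho> (i - j)) - 2 * (h * f (gp \<rho> i))
      \<le> h * Cf * (norm (gp \<rho> j))\<^sup>2"
    using assms(2) mult_left_mono by (fastforce simp: algebra_simps gp_add gp_diff)
  have shift: "gp \<rho> (i + j) - h *\<^sub>R \<alpha> = ?y + gp \<rho> j" "gp \<rho> (i - j) - h *\<^sub>R \<alpha> = ?y + gp \<rho> (- j)"
    by (simp_all add: gp_add gp_diff gp_uminus algebra_simps)
  show ?thesis
    using mean f_step unfolding sl_cost_def shift by (simp add: algebra_simps)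
qed

lemma sl_step_lipschitz_semiconcave_grid:
  fixes \<sigma> :: "real \<Rightarrow> real^'r^'n"
  assumes "0 < \<rho>" "0 \<le> h" and f: "bdd_lipschitz_semiconcave Cf f"
    and w: "lipschitz_semiconcave_grid \<rho> C w"
  shows "lipschitz_semiconcave_grid \<rho> (C + h * Cf) (sl_step \<phi> \<rho> h \<sigma> t f w)"
proof -
  have f_bdd: "\<bar>f x\<bar> \<le> Cf" for x
    using f by (simp add: bdd_lipschitz_semiconcave_def)
  have w_lower: "- C \<le> w l" for l
    using w by (simp add: lipschitz_semiconcave_grid_def)
  have bdd: "bdd_below (range (sl_cost \<phi> \<rho> h \<sigma> t f w i))" for i
    using sl_cost_lower_bound[OF assms(2) f_bdd w_lower] by (intro bdd_belowI2)
  show ?thesis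
    unfolding lipschitz_semiconcave_grid_def sl_step_def
  proof (intro conjI allI)
    show "- (C + h * Cf) \<le> (INF \<alpha>. sl_cost \<phi> \<rho> h \<sigma> t f w l \<alpha>)" for l
      using sl_cost_lower_bound[OF assms(2) f_bdd w_lower] by (intro cINF_greatest) simp_all
    show "(INF \<alpha>. sl_cost \<phi> \<rho> h \<sigma> t f w (l + q) \<alpha>) - (INF \<alpha>. sl_cost \<phi> \<rho> h \<sigma> t f w l \<alpha>)
        \<le> (C + h * Cf) * norm (gp \<rho> q)" for l q
    proof -
      have "w (l' + q) - w l' \<le> C * norm (gp \<rho> q)" for l'
        using w by (simp add: lipschitz_semiconcave_grid_def)
      from cINF_le_cINF_add[OF bdd sl_cost_shift_le[where w = w and q = q and i = l, OF assms(1,2) f this]]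
      show ?thesis by (simp add: algebra_simps)
    qed
    show "(INF \<alpha>. sl_cost \<phi> \<rho> h \<sigma> t f w (l + j) \<alpha>) + (INF \<alpha>. sl_cost \<phi> \<rho> h \<sigma> t f w (l - j) \<alpha>)
        - 2 * (INF \<alpha>. sl_cost \<phi> \<rho> h \<sigma> t f w l \<alpha>) \<le> (C + h * Cf) * (norm (gp \<rho> j))\<^sup>2" for l j
    proof -
      have "w (l' + j) + w (l' - j) - 2 * w l' \<le> C * (norm (gp \<rho> j))\<^sup>2" for l'
        using w by (simp add: lipschitz_semiconcave_grid_def)
      from cINF_second_difference_le[OF bdd bdd sl_cost_second_difference_le[where w = w and j = j and i = l, OF assms(1,2) f this]]
      show ?thesis by (simp add: algebra_simps)
    qed
  qed
qed

lemma scheme_vals_lipschitz_semiconcave_grid: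
  fixes \<sigma> :: "real \<Rightarrow> real^'r^'n"
  assumes "0 < \<rho>" "0 < h" "real N * h = T"
    and F: "\<And>t. t \<in> {0..T} \<Longrightarrow> bdd_lipschitz_semiconcave CF (\<lambda>x. F x (\<mu> t))"
    and G: "bdd_lipschitz_semiconcave CG (\<lambda>x. G x (\<mu> T))"
  shows "lipschitz_semiconcave_grid \<rho> (CG + real m * h * CF) (scheme_vals \<phi> F G \<sigma> T \<rho> h N \<mu> m)"
proof (induction m)
  case 0
  show ?case using lipschitz_semiconcave_grid_sample[OF G] by simp
next
  case (Suc m)
  have "real (N - Suc m) * h \<le> real N * h"
    using assms(2) by (intro mult_right_mono) simp_all
  then have "real (N - Suc m) * h \<in> {0..T}"
    using assms(2,3) by simp
  from sl_step_lipschitz_semiconcave_grid[OF assms(1) less_imp_le[OF assms(2)] F[OF this] Suc.IH]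
  have "lipschitz_semiconcave_grid \<rho> (CG + real m * h * CF + h * CF) (scheme_vals \<phi> F G \<sigma> T \<rho> h N \<mu> (Suc m))"
    by (simp only: scheme_vals_Suc)
  moreover have "CG + real m * h * CF + h * CF = CG + real (Suc m) * h * CF"
    by (simp add: algebra_simps)
  ultimately show ?case by (simp only:)
qed

lemma v_grid_lipschitz_semiconcave_grid:
  fixes \<sigma> :: "real \<Rightarrow> real^'r^'n"
  assumes "0 < \<rho>" "0 < h" "real N * h = T" "cont_P1_curve T \<mu>" "0 \<le> CF"
    and F: "\<And>m. P1 m \<Longrightarrow> bdd_lipschitz_semiconcave CF (\<lambda>x. F x m)"
    and G: "\<And>m. P1 m \<Longrightarrow> bdd_lipschitz_semiconcave CG (\<lambda>x. G x m)"
  shows "lipschitz_semiconcave_grid \<rho> (CG + T * CF) (v_grid \<phi> F G \<sigma> T \<rho> h N \<mu> k)"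
proof -
  have P1: "P1 (\<mu> t)" if "t \<in> {0..T}" for t
    using assms(4) that by (simp add: cont_P1_curve_def)
  have "0 \<le> T" using assms(2,3) by (metis mult_nonneg_nonneg of_nat_0_le_iff less_imp_le)
  then have "lipschitz_semiconcave_grid \<rho> (CG + real (N - k) * h * CF) (scheme_vals \<phi> F G \<sigma> T \<rho> h N \<mu> (N - k))"
    using P1 by (intro scheme_vals_lipschitz_semiconcave_grid[OF assms(1-3) F G]) simp_all
  moreover have "real (N - k) * h \<le> T"
    using assms(2,3) mult_right_mono[of "real (N - k)" "real N" h] by simp
  then have "CG + real (N - k) * h * CF \<le> CG + T * CF"
    using assms(5) by (simp add: mult_right_mono)
  ultimately show ?thesis
    unfolding v_grid_def by (rule lipschitz_semiconcave_grid_mono)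
qed

lemma interp_second_difference_grid_le:
  assumes "0 < \<rho>" "lipschitz_semiconcave_grid \<rho> C w"
  shows "interp \<phi> \<rho> w (gp \<rho> i + gp \<rho> j) - 2 * interp \<phi> \<rho> w (gp \<rho> i) + interp \<phi> \<rho> w (gp \<rho> i - gp \<rho> j)
    \<le> C * (norm (gp \<rho> j))\<^sup>2"
proof -
  have "interp \<phi> \<rho> w (gp \<rho> i + gp \<rho> j) + interp \<phi> \<rho> w (gp \<rho> i + gp \<rho> (- j)) - 2 * interp \<phi> \<rho> w (gp \<rho> i)
      = interp \<phi> \<rho> (\<lambda>l. w (l + j) + w (l + - j) - 2 * w l) (gp \<rho> i)"
    by (simp only: interp_translate[OF assms(1)] interp_second_difference)
  also have "\<dots> \<le> C * (norm (gp \<rho> j))\<^sup>2"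
    using assms(2) by (intro interp_le) (simp add: lipschitz_semiconcave_grid_def)
  finally show ?thesis by (simp add: gp_uminus)
qed

end

theorem lemma3p2:
  fixes F G :: "real^'n \<Rightarrow> (real^'n) measure \<Rightarrow> real"
    and \<sigma> :: "real \<Rightarrow> real^'r^'n"
    and m0 :: "(real^'n) measure"
    and T :: real
    and Tri :: "(int^'n) set set"
    and \<phi> :: "int^'n \<Rightarrow> real^'n \<Rightarrow> real"
  assumes "T > 0"
    and "A1 T F G \<sigma> m0"
    and "regular_triangulation Tri"
    and "barycentric_coords Tri \<phi>"
  shows "(\<exists>c>0. \<forall>\<rho> h N \<mu> t. \<rho> > 0 \<longrightarrow> h > 0 \<longrightarrow> real N * h = T \<longrightarrow> cont_P1_curve T \<mu> \<longrightarrow>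
            t \<in> {0..T} \<longrightarrow> c-lipschitz_on UNIV (\<lambda>x. v_rh \<phi> F G \<sigma> T \<rho> h N \<mu> x t))
       \<and> (\<exists>c>0. \<forall>\<rho> h N \<mu> t i j. \<rho> > 0 \<longrightarrow> h > 0 \<longrightarrow> real N * h = T \<longrightarrow> cont_P1_curve T \<mu> \<longrightarrow>
            t \<in> {0..T} \<longrightarrow>
            v_rh \<phi> F G \<sigma> T \<rho> h N \<mu> (gp \<rho> i + gp \<rho> j) t - 2 * v_rh \<phi> F G \<sigma> T \<rho> h N \<mu> (gp \<rho> i) t
              + v_rh \<phi> F G \<sigma> T \<rho> h N \<mu> (gp \<rho> i - gp \<rho> j) t \<le> c * (norm (gp \<rho> j))\<^sup>2)"
proof -
  interpret barycentric_triangulation Tri \<phi>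
    using assms(3,4) by unfold_locales
  obtain CF where "0 \<le> CF" and CF: "\<And>m. P1 m \<Longrightarrow> bdd_lipschitz_semiconcave CF (\<lambda>x. F x m)"
    using assms(2) unfolding A1_def by (metis A1_coupling_bounds)
  obtain CG where "0 \<le> CG" and CG: "\<And>m. P1 m \<Longrightarrow> bdd_lipschitz_semiconcave CG (\<lambda>x. G x m)"
    using assms(2) unfolding A1_def by (metis A1_coupling_bounds)
  obtain C_I where "0 \<le> C_I" and C_I: "\<And>\<rho> w M. 0 < \<rho> \<Longrightarrow> 0 \<le> M \<Longrightarrow>
      (\<And>a b. \<bar>w a - w b\<bar> \<le> M * dist (gp \<rho> a) (gp \<rho> b)) \<Longrightarrow> (C_I * M)-lipschitz_on UNIV (interp \<phi> \<rho> w)"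
    using interp_lipschitz by metis
  define C where "C = CG + T * CF"
  have "0 \<le> C" using \<open>0 \<le> CF\<close> \<open>0 \<le> CG\<close> assms(1) by (simp add: C_def)
  have grid: "lipschitz_semiconcave_grid \<rho> C (v_grid \<phi> F G \<sigma> T \<rho> h N \<mu> k)"
    if "0 < \<rho>" "0 < h" "real N * h = T" "cont_P1_curve T \<mu>"
    for \<rho> h :: real and N k :: nat and \<mu> :: "real \<Rightarrow> (real^'n) measure"
    unfolding C_def using that \<open>0 \<le> CF\<close> CF CG by (rule v_grid_lipschitz_semiconcave_grid)
  have lip: "(max 1 (C_I * C))-lipschitz_on UNIV (\<lambda>x. v_rh \<phi> F G \<sigma> T \<rho> h N \<mu> x t)"
    if "0 < \<rho>" "0 < h" "real N * h = T" "cont_P1_curve T \<mu>"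
    for \<rho> h t :: real and N :: nat and \<mu> :: "real \<Rightarrow> (real^'n) measure"
  proof -
    have "(C_I * C)-lipschitz_on UNIV (interp \<phi> \<rho> (v_grid \<phi> F G \<sigma> T \<rho> h N \<mu> (nat \<lfloor>t / h\<rfloor>)))"
      using grid[OF that] that(1) \<open>0 \<le> C\<close> by (intro C_I lipschitz_semiconcave_grid_abs_diff)
    then show ?thesis by (simp add: v_rh_def lipschitz_on_le)
  qed
  have semiconcave: "v_rh \<phi> F G \<sigma> T \<rho> h N \<mu> (gp \<rho> i + gp \<rho> j) t - 2 * v_rh \<phi> F G \<sigma> T \<rho> h N \<mu> (gp \<rho> i) t
      + v_rh \<phi> F G \<sigma> T \<rho> h N \<mu> (gp \<rho> i - gp \<rho> j) t \<le> max 1 C * (norm (gp \<rho> j))\<^sup>2"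
    if "0 < \<rho>" "0 < h" "real N * h = T" "cont_P1_curve T \<mu>"
    for \<rho> h t :: real and N :: nat and \<mu> :: "real \<Rightarrow> (real^'n) measure" and i j :: "int^'n"
    using interp_second_difference_grid_le[OF that(1) grid[where k = "nat \<lfloor>t / h\<rfloor>", OF that],
        where i = i and j = j]
      mult_right_mono[OF max.cobounded2[of C 1] zero_le_power2[of "norm (gp \<rho> j)"]]
    by (simp add: v_rh_def)
  show ?thesis
    by (rule conjI[OF exI[of _ "max 1 (C_I * C)"] exI[of _ "max 1 C"]]) (simp_all add: lip semiconcave)
qed

end
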